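(* Let $n\ge 0$. The map $\mathrm{shift}$ restricts to bijections (1) from the set of feasible set partitions of $[n]$ onto the set of 2-regular set partitions $\Lambda$ of $[n+1]$ such that $1+\max B\neq \min B'$ for all blocks $B,B'\in\Lambda$; and (2) from the set of poor noncrossing set partitions of $[n]$ onto the set of 2-regular noncrossing set partitions of $[n+1]$.
   Context: A set partition is a set of nonempty pairwise disjoint finite sets of integers (blocks); it is a partition of $\mathcal X$ if the union of its blocks is $\mathcal X$; $[n]=\{1,\dots,n\}$. A pair $(i,j)$ is an arc of $\Lambda$ if $i<j$ lie in the same block and $j$ is the least element of that block greater than $i$; $\mathrm{Arc}(\Lambda)$ is the set of arcs, which together with the ground set determines $\Lambda$. $\Lambda$ is noncrossing if there are no arcs $(i,k),(j,l)$ with $i<j<k<l$. A partition is feasible if every block has at least two elements, poor if every block has at most two elements, and 2-regular if no block contains both $i$ and $i+1$ for any integer $i$. For a partition $\Lambda$ of $[n]$, $\mathrm{shift}(\Lambda)$ is the partition of $[n+1]$ with arc set $\{(i,j+1):(i,j)\in\mathrm{Arc}(\Lambda)\}$. *)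

theory Defs
  imports Main
begin

definition is_set_partition :: "int set set \<Rightarrow> bool" where
  "is_set_partition P \<longleftrightarrow>
     (\<forall>B\<in>P. B \<noteq> {} \<and> finite B) \<and>
     (\<forall>B\<in>P. \<forall>B'\<in>P. B \<noteq> B' \<longrightarrow> B \<inter> B' = {})"

definition partition_of :: "int set set \<Rightarrow> int set \<Rightarrow> bool" where
  "partition_of P X \<longleftrightarrow> is_set_partition P \<and> \<Union>P = X"

definition arcs :: "int set set \<Rightarrow> (int \<times> int) set" where
  "arcs P = {(i, j). \<exists>B\<in>P. i \<in> B \<and> j \<in> B \<and> i < j \<and> (\<forall>k\<in>B. i < k \<longrightarrow> j \<le> k)}"

definition noncrossing :: "int set set \<Rightarrow> bool" where
  "noncrossing P \<longleftrightarrow>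
     \<not> (\<exists>i j k l. (i, k) \<in> arcs P \<and> (j, l) \<in> arcs P \<and> i < j \<and> j < k \<and> k < l)"

definition feasible :: "int set set \<Rightarrow> bool" where
  "feasible P \<longleftrightarrow> (\<forall>B\<in>P. card B \<ge> 2)"

definition poor :: "int set set \<Rightarrow> bool" where
  "poor P \<longleftrightarrow> (\<forall>B\<in>P. card B \<le> 2)"

definition two_regular :: "int set set \<Rightarrow> bool" where
  "two_regular P \<longleftrightarrow> (\<forall>B\<in>P. \<forall>i. \<not> (i \<in> B \<and> i + 1 \<in> B))"

definition shift :: "nat \<Rightarrow> int set set \<Rightarrow> int set set" where
  "shift n P = (THE Q. partition_of Q {1..int n + 1} \<and>
                        arcs Q = (\<lambda>(i, j). (i, j + 1)) ` arcs P)"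

end

theory Submission
  imports Defs
begin

text \<open>A partition of a finite set \<open>X\<close> is determined by its arcs, and a set of pairs is the arc
  set of a partition of \<open>X\<close> exactly when its pairs are increasing pairs in \<open>X\<close> forming a partial
  injection in both directions; the blocks are recovered as the classes of ``connected by a chain
  of arcs''. Lengthening every arc by one preserves these conditions from \<open>[n]\<close> to \<open>[n+1]\<close> and
  creates no arc \<open>(i, i+1)\<close>, and every arc set without such arcs can be shortened again. So shift
  is a bijection from the partitions of \<open>[n]\<close> onto the 2-regular partitions of \<open>[n+1]\<close>.

  The side conditions are local: an element is the maximum (minimum) of its block iff no arc
  leaves (enters) it, and shift keeps the starts of arcs and moves their ends up by one. Hence a
  singleton \<open>{k}\<close> becomes a block ending at \<open>k\<close> followed by a block starting at \<open>k+1\<close>, and a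
  middle element \<open>x\<close> of a block turns the consecutive arcs \<open>(i, x), (x, l)\<close> into the crossing
  arcs \<open>(i, x+1), (x, l+1)\<close>, while crossings stay crossings.\<close>

lemma rtrancl_increasing_le:
  fixes A :: "('a::order \<times> 'a) set"
  assumes "\<forall>(i, j)\<in>A. i < j" "(x, y) \<in> A\<^sup>*"
  shows "x \<le> y"
  using assms(2) by induction (use assms(1) in fastforce)+

lemma partition_of_quotient:
  assumes "equiv X R" "finite X"
  shows "partition_of (X // R) X"
  unfolding partition_of_def is_set_partition_def
proof (intro conjI ballI impI)
  fix B assume "B \<in> X // R"
  then show "B \<noteq> {}" "finite B"
    using in_quotient_imp_non_empty[OF assms(1)] in_quotient_imp_subset[OF assms(1)]
      finite_subset[OF _ assms(2)] by blast+
next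
  fix B B' assume "B \<in> X // R" "B' \<in> X // R" "B \<noteq> B'"
  then show "B \<inter> B' = {}" using quotient_disj[OF assms(1)] by blast
qed (rule Union_quotient[OF assms(1)])

lemma card_le_2_iff_subset_Min_Max:
  fixes B :: "'a::linorder set"
  assumes "finite B"
  shows "card B \<le> 2 \<longleftrightarrow> B \<subseteq> {Min B, Max B}"
proof
  assume card: "card B \<le> 2"
  show "B \<subseteq> {Min B, Max B}"
  proof
    fix x assume x: "x \<in> B"
    show "x \<in> {Min B, Max B}"
    proof (rule ccontr)
      assume "x \<notin> {Min B, Max B}"
      then have "Min B < x" "x < Max B"
        using x Min_le[OF assms x] Max_ge[OF assms x] by auto
      then have "card {Min B, x, Max B} = 3" by (simp add: less_imp_neq)
      moreover have "{Min B, x, Max B} \<subseteq> B"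
        using x Min_in[OF assms] Max_in[OF assms] by blast
      ultimately have "3 \<le> card B" using card_mono[OF assms] by metis
      with card show False by simp
    qed
  qed
next
  assume "B \<subseteq> {Min B, Max B}"
  then have "card B \<le> card {Min B, Max B}" by (rule card_mono[rotated]) simp
  also have "\<dots> \<le> 2" by (simp add: card_insert_le_m1)
  finally show "card B \<le> 2" .
qed

lemma two_le_card_iff_Min_ne_Max:
  fixes B :: "'a::linorder set"
  assumes "finite B" "B \<noteq> {}"
  shows "2 \<le> card B \<longleftrightarrow> Min B \<noteq> Max B"
proof
  assume "2 \<le> card B"
  then obtain x y where "x \<in> B" "y \<in> B" "x \<noteq> y"
    using card_le_Suc0_iff_eq[OF assms(1)] by (metis not_less_eq_eq numeral_2_eq_2)
  then show "Min B \<noteq> Max B"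
    using Min_le[OF assms(1)] Max_ge[OF assms(1)] by (metis antisym le_cases)
next
  assume "Min B \<noteq> Max B"
  then have "card {Min B, Max B} = 2" by simp
  moreover have "{Min B, Max B} \<subseteq> B" using Min_in Max_in assms by blast
  ultimately show "2 \<le> card B" using card_mono[OF assms(1)] by metis
qed

lemma weak_crossing_iff:
  fixes A :: "('a::linorder \<times> 'a) set"
  assumes less: "\<And>i j. (i, j) \<in> A \<Longrightarrow> i < j"
  shows "(\<exists>i j k l. (i, k) \<in> A \<and> (j, l) \<in> A \<and> i < j \<and> j \<le> k \<and> k < l) \<longleftrightarrow>
    (\<exists>i j k l. (i, k) \<in> A \<and> (j, l) \<in> A \<and> i < j \<and> j < k \<and> k < l) \<or> Domain A \<inter> Range A \<noteq> {}"
proof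
  assume "\<exists>i j k l. (i, k) \<in> A \<and> (j, l) \<in> A \<and> i < j \<and> j \<le> k \<and> k < l"
  then obtain i j k l where ij: "(i, k) \<in> A" "(j, l) \<in> A" "i < j" "j \<le> k" "k < l" by blast
  show "(\<exists>i j k l. (i, k) \<in> A \<and> (j, l) \<in> A \<and> i < j \<and> j < k \<and> k < l) \<or> Domain A \<inter> Range A \<noteq> {}"
  proof (cases "j = k")
    case True
    with ij(1,2) have "k \<in> Domain A \<inter> Range A" by blast
    then show ?thesis by blast
  next
    case False
    with ij show ?thesis by (metis order.not_eq_order_implies_strict)
  qed
next
  assume "(\<exists>i j k l. (i, k) \<in> A \<and> (j, l) \<in> A \<and> i < j \<and> j < k \<and> k < l) \<or> Domain A \<inter> Range A \<noteq> {}"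
  then show "\<exists>i j k l. (i, k) \<in> A \<and> (j, l) \<in> A \<and> i < j \<and> j \<le> k \<and> k < l"
  proof
    assume "\<exists>i j k l. (i, k) \<in> A \<and> (j, l) \<in> A \<and> i < j \<and> j < k \<and> k < l"
    then show ?thesis by (metis order_less_imp_le)
  next
    assume "Domain A \<inter> Range A \<noteq> {}"
    then obtain i x l where "(i, x) \<in> A" "(x, l) \<in> A" by blast
    moreover have "i < x" "x \<le> x" "x < l" using less calculation by auto
    ultimately show ?thesis by blast
  qed
qed

section \<open>Blocks and arcs\<close>

lemma partition_block_unique:
  assumes "is_set_partition Q" "B \<in> Q" "B' \<in> Q" "x \<in> B" "x \<in> B'"
  shows "B = B'"
  using assms unfolding is_set_partition_def by blast

lemma partition_block_nonempty: "is_set_partition Q \<Longrightarrow> B \<in> Q \<Longrightarrow> B \<noteq> {}"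
  unfolding is_set_partition_def by simp

lemma partition_block_finite: "is_set_partition Q \<Longrightarrow> B \<in> Q \<Longrightarrow> finite B"
  unfolding is_set_partition_def by simp

lemma arcs_less: "(i, j) \<in> arcs Q \<Longrightarrow> i < j"
  unfolding arcs_def by blast

lemma arc_ends_in_Union: "(i, j) \<in> arcs Q \<Longrightarrow> i \<in> \<Union>Q \<and> j \<in> \<Union>Q"
  unfolding arcs_def by blast

lemma arc_in_block:
  assumes "is_set_partition Q" "(i, j) \<in> arcs Q" "B \<in> Q" "i \<in> B \<or> j \<in> B"
  shows "i \<in> B \<and> j \<in> B \<and> i < j \<and> (\<forall>k\<in>B. i < k \<longrightarrow> j \<le> k)"
proof -
  obtain B' where B': "B' \<in> Q" "i \<in> B'" "j \<in> B'" "i < j" "\<forall>k\<in>B'. i < k \<longrightarrow> j \<le> k"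
    using assms(2) unfolding arcs_def by blast
  with assms have "B' = B"
    using partition_block_unique[OF assms(1) B'(1) assms(3)] by blast
  with B' show ?thesis by blast
qed

lemma rtrancl_arcs_in_block:
  assumes "is_set_partition Q" "B \<in> Q" "x \<in> B" "(x, y) \<in> (arcs Q)\<^sup>*"
  shows "y \<in> B"
  using assms(4) by induction (use assms arc_in_block in blast)+

lemma same_block_in_rtrancl_arcs:
  assumes p: "is_set_partition Q" and B: "B \<in> Q"
  shows "x \<in> B \<Longrightarrow> y \<in> B \<Longrightarrow> x \<le> y \<Longrightarrow> (x, y) \<in> (arcs Q)\<^sup>*"
proof (induction "nat (y - x)" arbitrary: x rule: less_induct)
  case less
  show ?case
  proof (cases "x = y")
    case False
    let ?S = "{k\<in>B. x < k}"
    have fin: "finite ?S" using partition_block_finite[OF p B] by simp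
    have ne: "?S \<noteq> {}" using False less.prems by auto
    define s where "s = Min ?S"
    have s: "s \<in> B" "x < s" "s \<le> y" and s_min: "\<forall>k\<in>B. x < k \<longrightarrow> s \<le> k"
      using Min_in[OF fin ne] Min_le[OF fin] False less.prems unfolding s_def by auto
    have "(x, s) \<in> arcs Q" unfolding arcs_def using B less.prems(1) s s_min by blast
    moreover have "(s, y) \<in> (arcs Q)\<^sup>*" using less.hyps[of s] s less.prems by auto
    ultimately show ?thesis by (rule converse_rtrancl_into_rtrancl)
  qed simp
qed

lemma Domain_arcs_iff:
  assumes "is_set_partition Q" "B \<in> Q" "x \<in> B"
  shows "x \<in> Domain (arcs Q) \<longleftrightarrow> (\<exists>k\<in>B. x < k)"
proof
  assume "x \<in> Domain (arcs Q)"
  then show "\<exists>k\<in>B. x < k" using arc_in_block[OF assms(1) _ assms(2)] assms(3) by blast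
next
  assume "\<exists>k\<in>B. x < k"
  then obtain k where "k \<in> B" "x < k" by blast
  then have "(x, k) \<in> (arcs Q)\<^sup>*" "x \<noteq> k" using same_block_in_rtrancl_arcs assms by auto
  then show "x \<in> Domain (arcs Q)" by (blast elim: converse_rtranclE)
qed

lemma Range_arcs_iff:
  assumes "is_set_partition Q" "B \<in> Q" "x \<in> B"
  shows "x \<in> Range (arcs Q) \<longleftrightarrow> (\<exists>k\<in>B. k < x)"
proof
  assume "x \<in> Range (arcs Q)"
  then show "\<exists>k\<in>B. k < x" using arc_in_block[OF assms(1) _ assms(2)] assms(3) by blast
next
  assume "\<exists>k\<in>B. k < x"
  then obtain k where "k \<in> B" "k < x" by blast
  then have "(k, x) \<in> (arcs Q)\<^sup>*" "k \<noteq> x" using same_block_in_rtrancl_arcs assms by auto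
  then show "x \<in> Range (arcs Q)" by (blast elim: rtranclE)
qed

lemma notin_Domain_arcs_iff:
  assumes "is_set_partition Q" "B \<in> Q" "x \<in> B"
  shows "x \<notin> Domain (arcs Q) \<longleftrightarrow> Max B = x"
  using Domain_arcs_iff[OF assms] assms(3)
    Max_eq_iff[OF partition_block_finite[OF assms(1,2)] partition_block_nonempty[OF assms(1,2)]]
  by (auto simp: not_less)

lemma notin_Range_arcs_iff:
  assumes "is_set_partition Q" "B \<in> Q" "x \<in> B"
  shows "x \<notin> Range (arcs Q) \<longleftrightarrow> Min B = x"
  using Range_arcs_iff[OF assms] assms(3)
    Min_eq_iff[OF partition_block_finite[OF assms(1,2)] partition_block_nonempty[OF assms(1,2)]]
  by (auto simp: not_less)

lemma feasible_iff_Union_subset_Domain_Range: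
  assumes p: "is_set_partition Q"
  shows "feasible Q \<longleftrightarrow> \<Union>Q \<subseteq> Domain (arcs Q) \<union> Range (arcs Q)"
proof -
  have "2 \<le> card B \<longleftrightarrow> B \<subseteq> Domain (arcs Q) \<union> Range (arcs Q)" if B: "B \<in> Q" for B
  proof -
    have fin: "finite B" and ne: "B \<noteq> {}"
      using partition_block_finite[OF p B] partition_block_nonempty[OF p B] .
    have "x \<in> Domain (arcs Q) \<union> Range (arcs Q) \<longleftrightarrow> \<not> (Max B = x \<and> Min B = x)" if "x \<in> B" for x
      using notin_Domain_arcs_iff[OF p B that] notin_Range_arcs_iff[OF p B that] by blast
    moreover have "Min B \<noteq> Max B \<longleftrightarrow> (\<forall>x\<in>B. \<not> (Max B = x \<and> Min B = x))"
      using Min_in[OF fin ne] by auto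
    ultimately show ?thesis
      using two_le_card_iff_Min_ne_Max[OF fin ne] by blast
  qed
  then show ?thesis unfolding feasible_def by blast
qed

lemma poor_iff_Domain_Range_disjoint:
  assumes p: "is_set_partition Q"
  shows "poor Q \<longleftrightarrow> Domain (arcs Q) \<inter> Range (arcs Q) = {}"
proof -
  have "card B \<le> 2 \<longleftrightarrow> B \<inter> Domain (arcs Q) \<inter> Range (arcs Q) = {}" if B: "B \<in> Q" for B
    using card_le_2_iff_subset_Min_Max[OF partition_block_finite[OF p B]]
      notin_Domain_arcs_iff[OF p B] notin_Range_arcs_iff[OF p B] by blast
  moreover have "Domain (arcs Q) \<subseteq> \<Union>Q" using arc_ends_in_Union by blast
  ultimately show ?thesis unfolding poor_def by blast
qed

lemma adjacent_blocks_iff: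
  assumes p: "is_set_partition Q"
  shows "(\<exists>B\<in>Q. \<exists>B'\<in>Q. 1 + Max B = Min B') \<longleftrightarrow>
    (\<exists>k. k \<in> \<Union>Q \<and> k + 1 \<in> \<Union>Q \<and> k \<notin> Domain (arcs Q) \<and> k + 1 \<notin> Range (arcs Q))"
proof
  assume "\<exists>B\<in>Q. \<exists>B'\<in>Q. 1 + Max B = Min B'"
  then obtain B B' where B: "B \<in> Q" "B' \<in> Q" and eq: "Max B + 1 = Min B'" by auto
  have in_blocks: "Max B \<in> B" "Max B + 1 \<in> B'"
    using Max_in Min_in partition_block_finite[OF p] partition_block_nonempty[OF p] B eq
    by metis+
  moreover have "Max B \<notin> Domain (arcs Q)" "Max B + 1 \<notin> Range (arcs Q)"
    using notin_Domain_arcs_iff[OF p B(1) in_blocks(1)] notin_Range_arcs_iff[OF p B(2) in_blocks(2)] eq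
    by simp_all
  ultimately show "\<exists>k. k \<in> \<Union>Q \<and> k + 1 \<in> \<Union>Q \<and> k \<notin> Domain (arcs Q) \<and> k + 1 \<notin> Range (arcs Q)"
    using B by blast
next
  assume "\<exists>k. k \<in> \<Union>Q \<and> k + 1 \<in> \<Union>Q \<and> k \<notin> Domain (arcs Q) \<and> k + 1 \<notin> Range (arcs Q)"
  then obtain k B B' where B: "B \<in> Q" "k \<in> B" "B' \<in> Q" "k + 1 \<in> B'"
    and k: "k \<notin> Domain (arcs Q)" "k + 1 \<notin> Range (arcs Q)" by blast
  have "1 + Max B = Min B'"
    using k notin_Domain_arcs_iff[OF p B(1,2)] notin_Range_arcs_iff[OF p B(3,4)] by simp
  with B show "\<exists>B\<in>Q. \<exists>B'\<in>Q. 1 + Max B = Min B'" by blast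
qed

lemma two_regular_iff_no_unit_arcs: "two_regular Q \<longleftrightarrow> (\<forall>i. (i, i + 1) \<notin> arcs Q)"
  unfolding two_regular_def arcs_def by force

section \<open>Partitions are determined by their arcs\<close>

definition arc_system :: "(int \<times> int) set \<Rightarrow> int set \<Rightarrow> bool" where
  "arc_system A X \<longleftrightarrow> A \<subseteq> X \<times> X \<and> (\<forall>(i, j)\<in>A. i < j) \<and>
     single_valued A \<and> single_valued (A\<inverse>)"

definition arc_connected :: "(int \<times> int) set \<Rightarrow> int set \<Rightarrow> (int \<times> int) set" where
  "arc_connected A X = {(x, y). x \<in> X \<and> y \<in> X \<and> ((x, y) \<in> A\<^sup>* \<or> (y, x) \<in> A\<^sup>*)}"

lemma equiv_arc_connected:
  assumes "arc_system A X"
  shows "equiv X (arc_connected A X)"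
proof (rule equivI)
  have sv: "single_valued A" "single_valued (A\<inverse>)" using assms arc_system_def by auto
  show "arc_connected A X \<subseteq> X \<times> X" "refl_on X (arc_connected A X)" "sym (arc_connected A X)"
    by (auto simp: arc_connected_def refl_on_def sym_def)
  show "trans (arc_connected A X)" unfolding trans_def
  proof (intro allI impI)
    fix x y z assume xy: "(x, y) \<in> arc_connected A X" and yz: "(y, z) \<in> arc_connected A X"
    \<comment> \<open>single-valuedness of A and of its converse makes forward and backward paths confluent\<close>
    have "(x, z) \<in> A\<^sup>* \<or> (z, x) \<in> A\<^sup>*"
      using xy yz single_valued_confluent[OF sv(1), of y x z]
        single_valued_confluent[OF sv(2), of y x z]
      unfolding arc_connected_def rtrancl_converse by (auto intro: rtrancl_trans)
    with xy yz show "(x, z) \<in> arc_connected A X" by (auto simp: arc_connected_def)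
  qed
qed

lemma arcs_quotient_arc_connected:
  assumes "arc_system A X"
  shows "arcs (X // arc_connected A X) = A"
proof (intro set_eqI iffI; clarify)
  let ?R = "arc_connected A X"
  have eq: "equiv X ?R" using equiv_arc_connected[OF assms] .
  have sub: "A \<subseteq> X \<times> X" and inc: "\<forall>(i, j)\<in>A. i < j" and sv: "single_valued A"
    using assms arc_system_def by auto
  have path: "(i, k) \<in> A\<^sup>*" if "(i, k) \<in> ?R" "i < k" for i k
    using that rtrancl_increasing_le[OF inc, of k i] unfolding arc_connected_def by auto
  fix i j
  show "(i, j) \<in> A" if ij: "(i, j) \<in> arcs (X // ?R)"
  proof -
    obtain B where B: "B \<in> X // ?R" "i \<in> B" "j \<in> B" "i < j" "\<forall>k\<in>B. i < k \<longrightarrow> j \<le> k"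
      using ij unfolding arcs_def by blast
    have "(i, j) \<in> A\<^sup>*" using path in_quotient_imp_in_rel[OF eq B(1)] B(2-4) by blast
    then obtain s where s: "(i, s) \<in> A" "(s, j) \<in> A\<^sup>*" using B(4)
      by (metis converse_rtranclE less_irrefl)
    have "s \<in> B" using in_quotient_imp_closed[OF eq B(1,2), of s] s(1) sub
      unfolding arc_connected_def by auto
    then have "j \<le> s" using B(5) s(1) inc by auto
    with rtrancl_increasing_le[OF inc s(2)] s(1) show ?thesis by simp
  qed
  show "(i, j) \<in> arcs (X // ?R)" if ij: "(i, j) \<in> A"
  proof -
    have X: "i \<in> X" "j \<in> X" using ij sub by auto
    let ?B = "?R `` {i}"
    have "\<forall>k\<in>?B. i < k \<longrightarrow> j \<le> k"
    proof (intro ballI impI)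
      fix k assume "k \<in> ?B" "i < k"
      then obtain s where s: "(i, s) \<in> A" "(s, k) \<in> A\<^sup>*"
        using path by (metis Image_singleton_iff converse_rtranclE less_irrefl)
      then have "s = j" using sv ij by (auto simp: single_valued_def)
      then show "j \<le> k" using rtrancl_increasing_le[OF inc s(2)] by simp
    qed
    moreover have "?B \<in> X // ?R" by (rule quotientI[OF X(1)])
    moreover have "i \<in> ?B" "j \<in> ?B" "i < j"
      using equiv_class_self[OF eq X(1)] ij X inc by (auto simp: arc_connected_def)
    ultimately show ?thesis unfolding arcs_def by blast
  qed
qed

lemma quotient_arc_connected_arcs:
  assumes "partition_of Q X"
  shows "X // arc_connected (arcs Q) X = Q"
proof -
  let ?R = "arc_connected (arcs Q) X"
  have p: "is_set_partition Q" and U: "\<Union>Q = X" using assms partition_of_def by auto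
  have block_eq: "?R `` {x} = B" if B: "B \<in> Q" "x \<in> B" for B x
  proof (intro set_eqI iffI)
    fix y assume "y \<in> ?R `` {x}"
    then have y: "y \<in> X" "(x, y) \<in> (arcs Q)\<^sup>* \<or> (y, x) \<in> (arcs Q)\<^sup>*"
      unfolding arc_connected_def by auto
    from y(1) obtain B' where B': "B' \<in> Q" "y \<in> B'" unfolding U[symmetric] by blast
    from y(2) have "y \<in> B \<or> x \<in> B'"
      using rtrancl_arcs_in_block[OF p B] rtrancl_arcs_in_block[OF p B'] by blast
    then show "y \<in> B" using partition_block_unique[OF p B(1) B'(1) B(2)] B' by blast
  next
    fix y assume "y \<in> B"
    then have "(x, y) \<in> (arcs Q)\<^sup>* \<or> (y, x) \<in> (arcs Q)\<^sup>*"
      using same_block_in_rtrancl_arcs[OF p B(1)] B(2) by (cases "x \<le> y") auto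
    moreover have "x \<in> X" "y \<in> X" using B \<open>y \<in> B\<close> U by blast+
    ultimately show "y \<in> ?R `` {x}" unfolding arc_connected_def by blast
  qed
  show ?thesis
  proof (intro set_eqI iffI)
    fix B assume "B \<in> X // ?R"
    then obtain x where "x \<in> X" "B = ?R `` {x}" by (rule quotientE)
    moreover obtain B' where "B' \<in> Q" "x \<in> B'" using \<open>x \<in> X\<close> unfolding U[symmetric] by blast
    ultimately show "B \<in> Q" using block_eq by simp
  next
    fix B assume B: "B \<in> Q"
    then obtain x where x: "x \<in> B" using partition_block_nonempty[OF p] by blast
    then have "?R `` {x} \<in> X // ?R" using B U by (intro quotientI) blast
    then show "B \<in> X // ?R" using block_eq[OF B x] by simp
  qed
qed

lemma partition_eqI_arcs:
  assumes "partition_of Q X" "partition_of Q' X" "arcs Q = arcs Q'"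
  shows "Q = Q'"
  by (metis assms quotient_arc_connected_arcs)

lemma arc_system_arcs:
  assumes "partition_of Q X"
  shows "arc_system (arcs Q) X"
proof -
  have p: "is_set_partition Q" and U: "\<Union>Q = X" using assms partition_of_def by auto
  have "single_valued (arcs Q)"
  proof (rule single_valuedI)
    fix i j j' assume a: "(i, j) \<in> arcs Q" "(i, j') \<in> arcs Q"
    then obtain B where "B \<in> Q" "i \<in> B" using arc_ends_in_Union by blast
    then show "j = j'" using arc_in_block[OF p a(1)] arc_in_block[OF p a(2)]
      by (meson order_antisym)
  qed
  moreover have "single_valued ((arcs Q)\<inverse>)"
  proof (rule single_valuedI)
    fix j i i' assume "(j, i) \<in> (arcs Q)\<inverse>" "(j, i') \<in> (arcs Q)\<inverse>"
    then have a: "(i, j) \<in> arcs Q" "(i', j) \<in> arcs Q" by auto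
    then obtain B where "B \<in> Q" "j \<in> B" using arc_ends_in_Union by blast
    then show "i = i'" using arc_in_block[OF p a(1)] arc_in_block[OF p a(2)]
      by (meson linorder_neqE not_le)
  qed
  moreover have "arcs Q \<subseteq> X \<times> X" using arc_ends_in_Union U by fast
  ultimately show ?thesis unfolding arc_system_def using arcs_less by fast
qed

lemma ex1_partition_with_arcs:
  assumes "arc_system A X" "finite X"
  shows "\<exists>!Q. partition_of Q X \<and> arcs Q = A"
proof (rule ex1I[of _ "X // arc_connected A X"])
  show "partition_of (X // arc_connected A X) X \<and> arcs (X // arc_connected A X) = A"
    using partition_of_quotient[OF equiv_arc_connected[OF assms(1)] assms(2)]
      arcs_quotient_arc_connected[OF assms(1)] by simp
  then show "Q = X // arc_connected A X" if "partition_of Q X \<and> arcs Q = A" for Q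
    using that partition_eqI_arcs by metis
qed

section \<open>Lengthening arcs\<close>

definition shift_arcs :: "(int \<times> int) set \<Rightarrow> (int \<times> int) set" where
  "shift_arcs A = (\<lambda>(i, j). (i, j + 1)) ` A"

lemma mem_shift_arcs_iff: "(i, j) \<in> shift_arcs A \<longleftrightarrow> (i, j - 1) \<in> A"
  unfolding shift_arcs_def by force

lemma shift_arcs_inject: "shift_arcs A = shift_arcs A' \<longleftrightarrow> A = A'"
proof -
  have "inj (\<lambda>(i::int, j::int). (i, j + 1))" by (auto simp: inj_def)
  then show ?thesis unfolding shift_arcs_def by (simp add: inj_image_eq_iff)
qed

lemma Domain_shift_arcs: "Domain (shift_arcs A) = Domain A"
  unfolding shift_arcs_def by force

lemma Range_shift_arcs_iff: "j \<in> Range (shift_arcs A) \<longleftrightarrow> j - 1 \<in> Range A"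
  by (simp add: Range_iff mem_shift_arcs_iff)

lemma crossing_shift_arcs_iff:
  "(\<exists>i j k l. (i, k) \<in> shift_arcs A \<and> (j, l) \<in> shift_arcs A \<and> i < j \<and> j < k \<and> k < l) \<longleftrightarrow>
   (\<exists>i j k l. (i, k) \<in> A \<and> (j, l) \<in> A \<and> i < j \<and> j \<le> k \<and> k < l)"
proof
  assume "\<exists>i j k l. (i, k) \<in> shift_arcs A \<and> (j, l) \<in> shift_arcs A \<and> i < j \<and> j < k \<and> k < l"
  then obtain i j k l where "(i, k - 1) \<in> A" "(j, l - 1) \<in> A" "i < j" "j \<le> k - 1" "k - 1 < l - 1"
    by (auto simp: mem_shift_arcs_iff)
  then show "\<exists>i j k l. (i, k) \<in> A \<and> (j, l) \<in> A \<and> i < j \<and> j \<le> k \<and> k < l" by blast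
next
  assume "\<exists>i j k l. (i, k) \<in> A \<and> (j, l) \<in> A \<and> i < j \<and> j \<le> k \<and> k < l"
  then obtain i j k l where "(i, k + 1) \<in> shift_arcs A" "(j, l + 1) \<in> shift_arcs A"
    "i < j" "j < k + 1" "k + 1 < l + 1"
    by (auto simp: mem_shift_arcs_iff)
  then show "\<exists>i j k l. (i, k) \<in> shift_arcs A \<and> (j, l) \<in> shift_arcs A \<and> i < j \<and> j < k \<and> k < l"
    by blast
qed

lemma arc_system_shift_arcs:
  assumes "arc_system A {1..m}"
  shows "arc_system (shift_arcs A) {1..m + 1}"
proof -
  have A: "A \<subseteq> {1..m} \<times> {1..m}" "single_valued A" "single_valued (A\<inverse>)"
    and less: "\<And>i j. (i, j) \<in> A \<Longrightarrow> i < j"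
    using assms by (auto simp: arc_system_def)
  have "shift_arcs A \<subseteq> {1..m + 1} \<times> {1..m + 1}"
    using A(1) by (auto simp: mem_shift_arcs_iff)
  moreover have "i < j" if "(i, j) \<in> shift_arcs A" for i j
    using that less[of i "j - 1"] by (simp add: mem_shift_arcs_iff)
  moreover have "single_valued (shift_arcs A)"
  proof (rule single_valuedI)
    fix x y z assume "(x, y) \<in> shift_arcs A" "(x, z) \<in> shift_arcs A"
    then have "y - 1 = z - 1" using A(2) by (simp add: mem_shift_arcs_iff single_valued_def)
    then show "y = z" by simp
  qed
  moreover have "single_valued ((shift_arcs A)\<inverse>)"
    using A(3) by (auto simp: mem_shift_arcs_iff single_valued_def)
  ultimately show ?thesis unfolding arc_system_def by blast
qed

section \<open>The shift map\<close>

lemma shift_eq_iff: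
  assumes "partition_of P {1..int n}"
  shows "shift n P = Q \<longleftrightarrow> partition_of Q {1..int n + 1} \<and> arcs Q = shift_arcs (arcs P)"
proof -
  let ?shifted = "\<lambda>Q. partition_of Q {1..int n + 1} \<and> arcs Q = shift_arcs (arcs P)"
  have ex1: "\<exists>!Q. ?shifted Q"
    by (rule ex1_partition_with_arcs[OF arc_system_shift_arcs[OF arc_system_arcs[OF assms]]]) simp
  have shift: "shift n P = (THE Q. ?shifted Q)" unfolding shift_def shift_arcs_def ..
  show ?thesis
  proof
    show "?shifted Q" if "shift n P = Q" using theI'[OF ex1] that shift by simp
    show "shift n P = Q" if "?shifted Q" using the1_equality[OF ex1 that] shift by simp
  qed
qed

lemma partition_of_shift: "partition_of P {1..int n} \<Longrightarrow> partition_of (shift n P) {1..int n + 1}"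
  and arcs_shift: "partition_of P {1..int n} \<Longrightarrow> arcs (shift n P) = shift_arcs (arcs P)"
  using shift_eq_iff by blast+

lemma inj_on_shift: "inj_on (shift n) {P. partition_of P {1..int n}}"
  by (rule inj_onI) (metis arcs_shift mem_Collect_eq partition_eqI_arcs shift_arcs_inject)

lemma two_regular_shift:
  assumes "partition_of P {1..int n}"
  shows "two_regular (shift n P)"
proof -
  have "(i, i + 1) \<notin> arcs (shift n P)" for i
    using arcs_less[of i i P] by (auto simp: arcs_shift[OF assms] mem_shift_arcs_iff)
  then show ?thesis by (simp add: two_regular_iff_no_unit_arcs)
qed

lemma two_regular_in_shift_image:
  assumes Q: "partition_of Q {1..int n + 1}" and "two_regular Q"
  shows "Q \<in> shift n ` {P. partition_of P {1..int n}}"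
proof -
  let ?A = "{(i, j). (i, j + 1) \<in> arcs Q}"
  have sub: "arcs Q \<subseteq> {1..int n + 1} \<times> {1..int n + 1}"
    and sv: "single_valued (arcs Q)" "single_valued ((arcs Q)\<inverse>)"
    using arc_system_arcs[OF Q] by (auto simp: arc_system_def)
  have "(i, i + 1) \<notin> arcs Q" for i
    using assms(2) two_regular_iff_no_unit_arcs by blast
  then have bounds: "1 \<le> i \<and> i < j \<and> j \<le> int n" if "(i, j) \<in> ?A" for i j
    using that arcs_less[of i "j + 1" Q] sub by (cases "j = i") auto
  have "arc_system ?A {1..int n}"
    unfolding arc_system_def
  proof (intro conjI)
    show "?A \<subseteq> {1..int n} \<times> {1..int n}" "\<forall>(i, j)\<in>?A. i < j"
      using bounds by fastforce+
    show "single_valued ?A"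
      by (rule single_valuedI) (use single_valuedD[OF sv(1)] in force)
    show "single_valued (?A\<inverse>)"
      by (rule single_valuedI) (use single_valuedD[OF sv(2)] in force)
  qed
  then obtain P where P: "partition_of P {1..int n}" "arcs P = ?A"
    using ex1_implies_ex[OF ex1_partition_with_arcs] by blast
  have "shift_arcs ?A = arcs Q" by (auto simp: mem_shift_arcs_iff)
  then have "shift n P = Q" by (simp add: shift_eq_iff[OF P(1)] Q P(2))
  with P(1) show ?thesis by blast
qed

lemma feasible_iff_shift_no_adjacent_blocks:
  assumes P: "partition_of P {1..int n}"
  shows "feasible P \<longleftrightarrow> (\<forall>B\<in>shift n P. \<forall>B'\<in>shift n P. 1 + Max B \<noteq> Min B')"
proof -
  let ?Q = "shift n P"
  have p: "is_set_partition P" "\<Union>P = {1..int n}"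
    and q: "is_set_partition ?Q" "\<Union>?Q = {1..int n + 1}"
    using P partition_of_shift[OF P] by (auto simp: partition_of_def)
  have "(\<forall>B\<in>?Q. \<forall>B'\<in>?Q. 1 + Max B \<noteq> Min B') \<longleftrightarrow>
      \<not> (\<exists>k. k \<in> \<Union>?Q \<and> k + 1 \<in> \<Union>?Q \<and> k \<notin> Domain (arcs ?Q) \<and> k + 1 \<notin> Range (arcs ?Q))"
    using adjacent_blocks_iff[OF q(1)] by blast
  also have "\<dots> \<longleftrightarrow> \<not> (\<exists>k\<in>{1..int n}. k \<notin> Domain (arcs P) \<and> k \<notin> Range (arcs P))"
    unfolding q(2) arcs_shift[OF P] Domain_shift_arcs Range_shift_arcs_iff by auto
  also have "\<dots> \<longleftrightarrow> feasible P"
    using feasible_iff_Union_subset_Domain_Range[OF p(1)] p(2) by blast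
  finally show ?thesis ..
qed

lemma noncrossing_shift_iff:
  assumes "partition_of P {1..int n}"
  shows "noncrossing (shift n P) \<longleftrightarrow> noncrossing P \<and> Domain (arcs P) \<inter> Range (arcs P) = {}"
proof -
  have "noncrossing (shift n P) \<longleftrightarrow>
      \<not> (\<exists>i j k l. (i, k) \<in> arcs P \<and> (j, l) \<in> arcs P \<and> i < j \<and> j \<le> k \<and> k < l)"
    unfolding noncrossing_def arcs_shift[OF assms] crossing_shift_arcs_iff ..
  also have "\<dots> \<longleftrightarrow> noncrossing P \<and> Domain (arcs P) \<inter> Range (arcs P) = {}"
    unfolding noncrossing_def using weak_crossing_iff[of "arcs P"] arcs_less by blast
  finally show ?thesis .
qed

lemma bij_betw_shift:
  assumes "\<And>P. partition_of P {1..int n} \<Longrightarrow> \<Phi> P \<longleftrightarrow> \<Psi> (shift n P)"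
    and "\<And>Q. partition_of Q {1..int n + 1} \<Longrightarrow> \<Psi> Q \<Longrightarrow> two_regular Q"
  shows "bij_betw (shift n) {P. partition_of P {1..int n} \<and> \<Phi> P}
           {Q. partition_of Q {1..int n + 1} \<and> \<Psi> Q}"
  unfolding bij_betw_def
proof
  show "inj_on (shift n) {P. partition_of P {1..int n} \<and> \<Phi> P}"
    using inj_on_shift by (rule inj_on_subset) blast
  show "shift n ` {P. partition_of P {1..int n} \<and> \<Phi> P} = {Q. partition_of Q {1..int n + 1} \<and> \<Psi> Q}"
  proof (intro equalityI subsetI)
    fix Q assume "Q \<in> shift n ` {P. partition_of P {1..int n} \<and> \<Phi> P}"
    then obtain P where "partition_of P {1..int n}" "\<Phi> P" "Q = shift n P" by blast
    then show "Q \<in> {Q. partition_of Q {1..int n + 1} \<and> \<Psi> Q}"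
      using partition_of_shift assms(1) by blast
  next
    fix Q assume "Q \<in> {Q. partition_of Q {1..int n + 1} \<and> \<Psi> Q}"
    then have Q: "partition_of Q {1..int n + 1}" "\<Psi> Q" by simp_all
    then obtain P where P: "partition_of P {1..int n}" "Q = shift n P"
      using two_regular_in_shift_image assms(2) by blast
    then have "\<Phi> P" using assms(1) Q(2) by simp
    with P show "Q \<in> shift n ` {P. partition_of P {1..int n} \<and> \<Phi> P}" by blast
  qed
qed

theorem lemma3p1:
  fixes n :: nat
  shows "bij_betw (shift n)
           {P. partition_of P {1..int n} \<and> feasible P}
           {Q. partition_of Q {1..int n + 1} \<and> two_regular Q \<and>
               (\<forall>B\<in>Q. \<forall>B'\<in>Q. 1 + Max B \<noteq> Min B')}
       \<and> bij_betw (shift n)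
           {P. partition_of P {1..int n} \<and> poor P \<and> noncrossing P}
           {Q. partition_of Q {1..int n + 1} \<and> two_regular Q \<and> noncrossing Q}"
proof
  show "bij_betw (shift n)
           {P. partition_of P {1..int n} \<and> feasible P}
           {Q. partition_of Q {1..int n + 1} \<and> two_regular Q \<and>
               (\<forall>B\<in>Q. \<forall>B'\<in>Q. 1 + Max B \<noteq> Min B')}"
    by (rule bij_betw_shift)
      (simp_all add: two_regular_shift feasible_iff_shift_no_adjacent_blocks)
  show "bij_betw (shift n)
           {P. partition_of P {1..int n} \<and> poor P \<and> noncrossing P}
           {Q. partition_of Q {1..int n + 1} \<and> two_regular Q \<and> noncrossing Q}"
    by (rule bij_betw_shift)
      (auto simp: two_regular_shift noncrossing_shift_iff poor_iff_Domain_Range_disjoint partition_of_def)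
qed

end
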